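(* Let $u$ be a fast decreasing distribution on $\mathbb R^D$ (acting on $\mathbb C[\boldsymbol x]$), $\mathcal Q_2\in\mathbb C[\boldsymbol x]$ of degree $m_2$ with $Z(\mathcal Q_2)\cap\operatorname{supp}u=\varnothing$, and $\check u$ a linear functional with $\mathcal Q_2\check u=u$; assume $u,\check u$ quasi-definite and let $R=\langle\check u,P(\boldsymbol x)\chi(\boldsymbol x)^\top\rangle$. Then for every $k>m_2$ there exists a poised set of multi-indices, i.e. an ordered set $\mathcal M_k=\{\boldsymbol\beta_1,\dots,\boldsymbol\beta_r\}$ of distinct multi-indices with $|\boldsymbol\beta_i|<k$, $r=N_{k-1}-N_{k-m_2-1}$, such that the $r\times r$ matrix with block rows $\big(R_{[l],\boldsymbol\beta_1},\dots,R_{[l],\boldsymbol\beta_r}\big)$, $l=k-m_2,\dots,k-1$, is nonsingular.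
   Context: $[k]=\{\boldsymbol\alpha\in\mathbb Z_+^D:|\boldsymbol\alpha|=k\}$, $|[k]|=\binom{D+k-1}{k}$, $N_k=\binom{D+k}{D}$ (with $N_{-1}=0$). Multi-indices are ordered by graded lexicographic order; $\chi(\boldsymbol x)$ is the semi-infinite vector of monomials in this order; semi-infinite matrices have blocks $A_{[k],[l]}\in\mathbb C^{|[k]|\times|[l]|}$, and for a multi-index $\boldsymbol\beta$, $A_{[l],\boldsymbol\beta}\in\mathbb C^{|[l]|}$ is the column of block row $[l]$ indexed by $\boldsymbol\beta$. For a linear functional $u$ on $\mathbb C[\boldsymbol x]$, $\langle Qu,P\rangle:=\langle u,QP\rangle$; moment matrix $G=\langle u,\chi\chi^\top\rangle$; quasi-definite: all block truncations $G^{[k]}$ nonsingular; then $G=S^{-1}HS^{-\top}$ with $S$ block lower unitriangular, $H$ block diagonal, and $P(\boldsymbol x)=S\chi(\boldsymbol x)$ are the monic multivariate orthogonal polynomials. *)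

theory Defs
  imports "HOL-Analysis.Analysis" "HOL-Combinatorics.Permutations"
begin

text \<open>Setting: R^D is the type real^'n with D = CARD('n).
  Multi-indices are functions 'n => nat; a polynomial in C[x] is a finitely supported
  coefficient function (multi-index => complex).  A linear functional on C[x] is
  represented by its moments (multi-index => complex), i.e. its values on monomials.\<close>

type_synonym 'n mi = "'n \<Rightarrow> nat"
type_synonym 'n cpoly = "'n mi \<Rightarrow> complex"
type_synonym 'n lfun = "'n mi \<Rightarrow> complex"

definition mdeg :: "'n::finite mi \<Rightarrow> nat" where
  "mdeg \<alpha> = (\<Sum>i\<in>UNIV. \<alpha> i)"

definition madd :: "'n mi \<Rightarrow> 'n mi \<Rightarrow> 'n mi" where
  "madd \<alpha> \<beta> = (\<lambda>i. \<alpha> i + \<beta> i)"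

definition psupp :: "'n cpoly \<Rightarrow> 'n mi set" where
  "psupp p = {\<alpha>. p \<alpha> \<noteq> 0}"

definition is_poly :: "'n cpoly \<Rightarrow> bool" where
  "is_poly p \<longleftrightarrow> finite (psupp p)"

definition pdegree :: "'n::finite cpoly \<Rightarrow> nat" where
  "pdegree p = Max (mdeg ` psupp p)"

definition peval :: "'n::finite cpoly \<Rightarrow> real^'n \<Rightarrow> complex" where
  "peval p x = (\<Sum>\<alpha>\<in>psupp p. p \<alpha> * complex_of_real (\<Prod>i\<in>UNIV. (x $ i) ^ \<alpha> i))"

definition zero_set :: "'n::finite cpoly \<Rightarrow> (real^'n) set" where
  "zero_set p = {x. peval p x = 0}"

text \<open>pairing <u, p x^beta> of a functional with a polynomial times a monomial\<close>
definition pair_mono :: "'n lfun \<Rightarrow> 'n cpoly \<Rightarrow> 'n mi \<Rightarrow> complex" where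
  "pair_mono u p \<beta> = (\<Sum>\<gamma>\<in>psupp p. p \<gamma> * u (madd \<gamma> \<beta>))"

text \<open>Q u = v, i.e. <v, p> = <u, Q p> for all p (checked on the monomial basis)\<close>
definition poly_times_lf :: "'n cpoly \<Rightarrow> 'n lfun \<Rightarrow> 'n lfun" where
  "poly_times_lf Q u = (\<lambda>\<beta>. pair_mono u Q \<beta>)"

definition det_on :: "'a set \<Rightarrow> ('a \<Rightarrow> 'a \<Rightarrow> complex) \<Rightarrow> complex" where
  "det_on I M = (\<Sum>p\<in>{p. p permutes I}. of_int (sign p) * (\<Prod>i\<in>I. M i (p i)))"

text \<open>moment matrix G = <u, chi chi^T>, block truncation G^[k], quasi-definiteness\<close>
definition quasi_definite :: "'n::finite lfun \<Rightarrow> bool" where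
  "quasi_definite u \<longleftrightarrow>
     (\<forall>k. det_on {\<alpha>. mdeg \<alpha> \<le> k} (\<lambda>\<alpha> \<beta>. u (madd \<alpha> \<beta>)) \<noteq> 0)"

text \<open>The monic MOP P_alpha (row alpha of P = S chi): P_alpha = x^alpha + lower degree terms
  (S block lower unitriangular) and <u, P_alpha x^beta> = 0 for |beta| < |alpha|
  (S G = H S^{-T} block upper triangular).\<close>
definition mop :: "'n::finite lfun \<Rightarrow> 'n mi \<Rightarrow> 'n cpoly" where
  "mop u \<alpha> = (THE p. is_poly p \<and> p \<alpha> = 1
      \<and> (\<forall>\<gamma>. \<gamma> \<noteq> \<alpha> \<and> mdeg \<gamma> \<ge> mdeg \<alpha> \<longrightarrow> p \<gamma> = 0)
      \<and> (\<forall>\<beta>. mdeg \<beta> < mdeg \<alpha> \<longrightarrow> pair_mono u p \<beta> = 0))"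

definition Rmat :: "'n::finite lfun \<Rightarrow> 'n lfun \<Rightarrow> 'n mi \<Rightarrow> 'n mi \<Rightarrow> complex" where
  "Rmat u uc \<alpha> \<beta> = pair_mono uc (mop u \<alpha>) \<beta>"

definition Nk :: "nat \<Rightarrow> nat \<Rightarrow> nat" where
  "Nk D k = (D + k) choose D"

definition pd :: "'n::finite \<Rightarrow> (real^'n \<Rightarrow> complex) \<Rightarrow> (real^'n \<Rightarrow> complex)" where
  "pd i \<phi> = (\<lambda>x. vector_derivative (\<lambda>t::real. \<phi> (x + t *\<^sub>R axis i 1)) (at 0))"

definition dlist :: "'n::finite list \<Rightarrow> (real^'n \<Rightarrow> complex) \<Rightarrow> (real^'n \<Rightarrow> complex)" where
  "dlist is \<phi> = fold pd is \<phi>"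

text \<open>partial derivative d^alpha (for smooth functions the order is irrelevant)\<close>
definition dpart :: "'n::finite mi \<Rightarrow> (real^'n \<Rightarrow> complex) \<Rightarrow> (real^'n \<Rightarrow> complex)" where
  "dpart \<alpha> \<phi> = dlist (SOME is. \<forall>i. count (mset is) i = \<alpha> i) \<phi>"

definition smooth :: "(real^'n::finite \<Rightarrow> complex) \<Rightarrow> bool" where
  "smooth \<phi> \<longleftrightarrow> (\<forall>is. continuous_on UNIV (dlist is \<phi>) \<and>
      (\<forall>i x. (\<lambda>t::real. dlist is \<phi> (x + t *\<^sub>R axis i 1)) differentiable (at 0)))"

definition tsupport :: "(real^'n::finite \<Rightarrow> complex) \<Rightarrow> (real^'n) set" where
  "tsupport \<phi> = closure {x. \<phi> x \<noteq> 0}"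

definition test_fun :: "(real^'n::finite \<Rightarrow> complex) \<Rightarrow> bool" where
  "test_fun \<phi> \<longleftrightarrow> smooth \<phi> \<and> compact (tsupport \<phi>)"

definition monomial_fun :: "'n::finite mi \<Rightarrow> real^'n \<Rightarrow> complex" where
  "monomial_fun \<gamma> x = complex_of_real (\<Prod>i\<in>UNIV. (x $ i) ^ \<gamma> i)"

definition decays :: "nat \<Rightarrow> (real^'n::finite \<Rightarrow> complex) \<Rightarrow> bool" where
  "decays k f \<longleftrightarrow> continuous_on UNIV f \<and> bounded (range (\<lambda>x. ((1 + norm x) ^ k) *\<^sub>R f x))"

definition fd_rep :: "((real^'n::finite \<Rightarrow> complex) \<Rightarrow> complex) \<Rightarrow> nat \<Rightarrow> 'n mi set
     \<Rightarrow> ('n mi \<Rightarrow> real^'n \<Rightarrow> complex) \<Rightarrow> bool" where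
  "fd_rep T k A f \<longleftrightarrow> finite A \<and> (\<forall>\<alpha>\<in>A. decays k (f \<alpha>)) \<and>
     (\<forall>\<phi>. test_fun \<phi> \<longrightarrow>
        T \<phi> = (\<Sum>\<alpha>\<in>A. (-1) ^ mdeg \<alpha> * integral\<^sup>L lborel (\<lambda>x. f \<alpha> x * dpart \<alpha> \<phi> x)))"

text \<open>Fast decreasing distributions (Schwartz's space O'_C), via Schwartz's structure
  theorem: for every k, T is a finite sum of derivatives of continuous functions O(|x|^-k).\<close>
definition fast_decreasing :: "((real^'n::finite \<Rightarrow> complex) \<Rightarrow> complex) \<Rightarrow> bool" where
  "fast_decreasing T \<longleftrightarrow> (\<forall>k. \<exists>A f. fd_rep T k A f)"

text \<open>action of T on the monomial x^gamma (extension of T to polynomials), computed from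
  any representation with enough decay\<close>
definition dist_moment :: "((real^'n::finite \<Rightarrow> complex) \<Rightarrow> complex) \<Rightarrow> 'n mi \<Rightarrow> complex" where
  "dist_moment T \<gamma> = (THE c. \<forall>k A f. mdeg \<gamma> + CARD('n) + 1 \<le> k \<longrightarrow> fd_rep T k A f \<longrightarrow>
      c = (\<Sum>\<alpha>\<in>A. (-1) ^ mdeg \<alpha> * integral\<^sup>L lborel (\<lambda>x. f \<alpha> x * dpart \<alpha> (monomial_fun \<gamma>) x)))"

definition dist_support :: "((real^'n::finite \<Rightarrow> complex) \<Rightarrow> complex) \<Rightarrow> (real^'n) set" where
  "dist_support T = - {x. \<exists>U. open U \<and> x \<in> U \<and>
      (\<forall>\<phi>. test_fun \<phi> \<and> tsupport \<phi> \<subseteq> U \<longrightarrow> T \<phi> = 0)}"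

end

(* Only the quasi-definiteness of u and uc matters.  Truncated to degrees below k, the matrix R
   factors as S G', where S holds the coefficients of the monic orthogonal polynomials of u
   (unitriangular) and G' is the moment matrix of uc (nonsingular).  Hence the rows of R with
   |alpha| < k are linearly independent on the columns |beta| < k, and every linearly
   independent family of rows has a nonsingular square minor: columns can be chosen one at a time,
   since expanding the determinant along the new column gives a combination of rows whose
   coefficient at the new row is the minor chosen so far. *)
theory Submission
  imports Defs "Jordan_Normal_Form.Determinant" "HOL-Library.Multiset"
begin

section \<open>Determinants of matrices indexed by finite sets\<close>

lemma det_on_empty [simp]: "det_on {} M = 1"
  by (simp add: det_on_def permutes_empty)

lemma det_on_reindex:
  assumes f: "bij_betw f A B" and finA: "finite A"
  shows "det_on B M = det_on A (\<lambda>i j. M (f i) (f j))"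
proof -
  let ?h = "map_permutation A f"
  have inj: "inj_on f A" using f bij_betw_def by blast
  have fi: "bij_betw (inv_into A f) B A" by (rule bij_betw_inv_into[OF f])
  have hb: "bij_betw ?h {p. p permutes A} {q. q permutes B}"
  proof (rule bij_betw_byWitness[where f'="map_permutation B (inv_into A f)"])
    show "\<forall>a\<in>{p. p permutes A}. map_permutation B (inv_into A f) (?h a) = a"
      using map_permutation_compose_inv[OF f] inj by (simp add: inv_into_f_f)
    show "\<forall>a\<in>{q. q permutes B}. ?h (map_permutation B (inv_into A f) a) = a"
      using map_permutation_compose_inv[OF fi, of _ f] f by (simp add: bij_betw_inv_into_right)
    show "?h ` {p. p permutes A} \<subseteq> {q. q permutes B}"
      using map_permutation_permutes[OF f] by blast
    show "map_permutation B (inv_into A f) ` {q. q permutes B} \<subseteq> {p. p permutes A}"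
      using map_permutation_permutes[OF fi] by blast
  qed
  have prod: "(\<Prod>j\<in>B. M j (?h p j)) = (\<Prod>i\<in>A. M (f i) (f (p i)))" for p
  proof -
    have "(\<Prod>j\<in>B. M j (?h p j)) = (\<Prod>i\<in>A. M (f i) (?h p (f i)))"
      by (rule prod.reindex_bij_betw[OF f, symmetric])
    also have "\<dots> = (\<Prod>i\<in>A. M (f i) (f (p i)))"
      by (rule prod.cong[OF refl]) (simp add: map_permutation_apply[OF inj])
    finally show ?thesis .
  qed
  have "det_on B M = (\<Sum>p\<in>{p. p permutes A}. of_int (sign (?h p)) * (\<Prod>j\<in>B. M j (?h p j)))"
    unfolding det_on_def by (rule sum.reindex_bij_betw[OF hb, symmetric])
  also have "\<dots> = (\<Sum>p\<in>{p. p permutes A}. of_int (sign p) * (\<Prod>i\<in>A. M (f i) (f (p i))))"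
    using sign_map_permutation[OF inj _ finA] by (intro sum.cong) (simp_all add: prod)
  finally show ?thesis unfolding det_on_def .
qed

lemma det_on_as_det_mat:
  assumes "finite I"
  obtains e where "bij_betw e {0..<card I} I"
    and "\<And>M. det_on I M = det (mat (card I) (card I) (\<lambda>(i, j). M (e i) (e j)))"
proof -
  obtain e where e: "bij_betw e {0..<card I} I"
    using ex_bij_betw_nat_finite[OF assms] by blast
  have "det_on I M = det (mat (card I) (card I) (\<lambda>(i, j). M (e i) (e j)))" for M
  proof -
    have "det_on I M = det_on {0..<card I} (\<lambda>i j. M (e i) (e j))"
      by (rule det_on_reindex[OF e]) simp
    then show ?thesis unfolding det_on_def by (subst det_def'[of _ "card I"]) auto
  qed
  with e that show ?thesis by blast
qed

lemma det_on_nonzero_kernel: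
  assumes fin: "finite I" and d: "det_on I M \<noteq> 0"
    and v: "\<And>i. i \<in> I \<Longrightarrow> (\<Sum>j\<in>I. M i j * v j) = 0" and j: "j \<in> I"
  shows "v j = 0"
proof -
  obtain e where e: "bij_betw e {0..<card I} I"
    and de: "\<And>M. det_on I M = det (mat (card I) (card I) (\<lambda>(i, j). M (e i) (e j)))"
    using det_on_as_det_mat[OF fin] by blast
  let ?n = "card I"
  let ?A = "mat ?n ?n (\<lambda>(i, j). M (e i) (e j))"
  let ?w = "vec ?n (\<lambda>k. v (e k))"
  have A: "?A \<in> carrier_mat ?n ?n" by simp
  have "?A *\<^sub>v ?w = 0\<^sub>v ?n"
  proof (rule eq_vecI)
    fix i assume "i < dim_vec (0\<^sub>v ?n :: complex vec)"
    then have i: "i < ?n" by simp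
    have "vec_index (?A *\<^sub>v ?w) i = (\<Sum>k\<in>{0..<?n}. M (e i) (e k) * v (e k))"
      using i by (simp add: scalar_prod_def)
    also have "\<dots> = (\<Sum>j\<in>I. M (e i) j * v j)"
      by (rule sum.reindex_bij_betw[OF e])
    also have "\<dots> = 0" using v e i by (simp add: bij_betw_apply)
    finally show "vec_index (?A *\<^sub>v ?w) i = vec_index (0\<^sub>v ?n) i" using i by simp
  qed simp
  moreover have "det ?A \<noteq> 0" using d de[of M] by simp
  ultimately have "?w = 0\<^sub>v ?n"
    using det_0_iff_vec_prod_zero_field[OF A] vec_carrier by blast
  moreover obtain k where "k < ?n" "j = e k"
    using e j by (metis atLeastLessThan_iff bij_betw_iff_bijections)
  ultimately show "v j = 0" by (metis index_vec index_zero_vec(1))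
qed

lemma det_on_nonzero_solvable:
  assumes fin: "finite I" and d: "det_on I M \<noteq> 0"
  shows "\<exists>c. \<forall>i\<in>I. (\<Sum>j\<in>I. M i j * c j) = b i"
proof -
  obtain e where e: "bij_betw e {0..<card I} I"
    and de: "\<And>M. det_on I M = det (mat (card I) (card I) (\<lambda>(i, j). M (e i) (e j)))"
    using det_on_as_det_mat[OF fin] by blast
  let ?n = "card I"
  let ?A = "mat ?n ?n (\<lambda>(i, j). M (e i) (e j))"
  have A: "?A \<in> carrier_mat ?n ?n" by simp
  have "?A \<in> Units (ring_mat TYPE(complex) ?n ())"
    by (rule det_non_zero_imp_unit[OF A]) (use d de in auto)
  then obtain B where B: "B \<in> carrier_mat ?n ?n" and AB: "?A * B = 1\<^sub>m ?n"
    unfolding Units_def ring_mat_def by auto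
  let ?b = "vec ?n (\<lambda>k. b (e k))"
  define w where "w = B *\<^sub>v ?b"
  have w: "w \<in> carrier_vec ?n" using B by (simp add: w_def)
  have Aw: "?A *\<^sub>v w = ?b"
    using assoc_mult_mat_vec[OF A B, of ?b, symmetric] AB by (simp add: w_def)
  define c where "c j = vec_index w (inv_into {0..<?n} e j)" for j
  have "(\<Sum>j\<in>I. M i j * c j) = b i" if "i \<in> I" for i
  proof -
    obtain k0 where k0: "k0 < ?n" "i = e k0"
      using e \<open>i \<in> I\<close> by (metis atLeastLessThan_iff bij_betw_iff_bijections)
    have "(\<Sum>j\<in>I. M i j * c j) = (\<Sum>k\<in>{0..<?n}. M i (e k) * c (e k))"
      by (rule sum.reindex_bij_betw[OF e, symmetric])
    also have "\<dots> = (\<Sum>k\<in>{0..<?n}. M (e k0) (e k) * vec_index w k)"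
      using e k0 by (intro sum.cong) (auto simp: c_def bij_betw_inv_into_left)
    also have "\<dots> = vec_index (?A *\<^sub>v w) k0" using k0 w by (simp add: scalar_prod_def)
    also have "\<dots> = b i" using Aw k0 by simp
    finally show ?thesis .
  qed
  then show ?thesis by blast
qed

lemma det_on_eq_columns:
  assumes fin: "finite I" and j: "j1 \<in> I" "j2 \<in> I" "j1 \<noteq> j2"
    and eq: "\<And>i. M i j1 = M i j2"
  shows "det_on I M = 0"
proof (rule ccontr)
  assume d: "det_on I M \<noteq> 0"
  define v where "v j = (if j = j1 then 1 else if j = j2 then -1 else (0::complex))" for j
  have "(\<Sum>j\<in>I. M i j * v j) = 0" for i
  proof -
    have "(\<Sum>j\<in>I. M i j * v j) = (\<Sum>j\<in>{j1, j2}. M i j * v j)"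
      by (rule sum.mono_neutral_right) (use fin j in \<open>auto simp: v_def\<close>)
    also have "\<dots> = 0" using j eq by (simp add: v_def)
    finally show ?thesis .
  qed
  then have "v j1 = 0" using det_on_nonzero_kernel[OF fin d _ j(1)] by blast
  then show False by (simp add: v_def)
qed

lemma permutes_fixing_iff: "(p permutes I \<and> p a = a) \<longleftrightarrow> p permutes (I - {a})"
  using permutes_subset[of p "I - {a}" I] permutes_not_in[of p "I - {a}" a]
  by (auto simp: permutes_def)

lemma det_on_expand_column:
  assumes fin: "finite I" and a: "a \<in> I"
  shows "det_on I (\<lambda>i j. if j = a then v i else N i j) =
    (\<Sum>i\<in>I. v i * (\<Sum>p\<in>{p. p permutes I \<and> p i = a}. of_int (sign p) * (\<Prod>l\<in>I-{i}. N l (p l))))"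
proof -
  let ?M = "\<lambda>i j. if j = a then v i else N i j"
  let ?P = "{p. p permutes I}"
  let ?h = "\<lambda>p. of_int (sign p) * (v (inv_into UNIV p a) * (\<Prod>l\<in>I-{inv_into UNIV p a}. N l (p l)))"
  have finP: "finite ?P" using finite_permutations[OF fin] by simp
  have summand: "of_int (sign p) * (\<Prod>i\<in>I. ?M i (p i)) = ?h p" if p: "p permutes I" for p
  proof -
    let ?i0 = "inv_into UNIV p a"
    have i0: "?i0 \<in> I" using permutes_in_image[OF permutes_inv[OF p]] a by simp
    have "(\<Prod>i\<in>I. ?M i (p i)) = ?M ?i0 (p ?i0) * (\<Prod>i\<in>I-{?i0}. ?M i (p i))"
      by (rule prod.remove[OF fin i0])
    also have "(\<Prod>i\<in>I-{?i0}. ?M i (p i)) = (\<Prod>l\<in>I-{?i0}. N l (p l))"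
      using permutes_inverses(2)[OF p] by (intro prod.cong) auto
    finally show ?thesis using permutes_inverses(1)[OF p] by simp
  qed
  have fibre: "{p \<in> ?P. inv_into UNIV p a = i} = {p. p permutes I \<and> p i = a}" for i
    using permutes_inverses[of _ I] by auto
  have "det_on I ?M = (\<Sum>p\<in>?P. ?h p)"
    unfolding det_on_def by (rule sum.cong) (auto simp: summand)
  also have "\<dots> = (\<Sum>i\<in>I. \<Sum>p\<in>{p \<in> ?P. inv_into UNIV p a = i}. ?h p)"
    by (rule sum.group[symmetric, OF finP fin])
       (use a in \<open>auto intro: permutes_in_image[OF permutes_inv, THEN iffD2]\<close>)
  also have "\<dots> = (\<Sum>i\<in>I. v i * (\<Sum>p\<in>{p. p permutes I \<and> p i = a}. of_int (sign p) * (\<Prod>l\<in>I-{i}. N l (p l))))"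
    unfolding fibre sum_distrib_left
    by (intro sum.cong refl) (auto simp: permutes_inverses(2))
  finally show ?thesis .
qed

lemma det_on_linear_in_column:
  assumes "finite I" and "a \<in> I"
  obtains w where "\<And>v. det_on I (\<lambda>i j. if j = a then v i else N i j) = (\<Sum>i\<in>I. v i * w i)"
    and "w a = det_on (I - {a}) N"
proof
  define w where
    "w i = (\<Sum>p\<in>{p. p permutes I \<and> p i = a}. of_int (sign p) * (\<Prod>l\<in>I-{i}. N l (p l)))" for i
  show "det_on I (\<lambda>i j. if j = a then v i else N i j) = (\<Sum>i\<in>I. v i * w i)" for v
    unfolding w_def by (rule det_on_expand_column[OF assms])
  show "w a = det_on (I - {a}) N"
    unfolding w_def det_on_def permutes_fixing_iff ..
qed

definition lin_indep_rows :: "'a set \<Rightarrow> 'b set \<Rightarrow> ('a \<Rightarrow> 'b \<Rightarrow> complex) \<Rightarrow> bool" where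
  "lin_indep_rows A C R \<longleftrightarrow>
     (\<forall>c. (\<forall>\<beta>\<in>C. (\<Sum>\<alpha>\<in>A. c \<alpha> * R \<alpha> \<beta>) = 0) \<longrightarrow> (\<forall>\<alpha>\<in>A. c \<alpha> = 0))"

lemma lin_indep_rows_subset:
  assumes indep: "lin_indep_rows A C R" and sub: "A' \<subseteq> A" and fin: "finite A"
  shows "lin_indep_rows A' C R"
  unfolding lin_indep_rows_def
proof (intro allI impI ballI)
  fix c \<alpha> assume c: "\<forall>\<beta>\<in>C. (\<Sum>\<alpha>\<in>A'. c \<alpha> * R \<alpha> \<beta>) = 0" and \<alpha>: "\<alpha> \<in> A'"
  define c' where "c' \<alpha> = (if \<alpha> \<in> A' then c \<alpha> else 0)" for \<alpha>
  have "(\<Sum>\<alpha>\<in>A. c' \<alpha> * R \<alpha> \<beta>) = (\<Sum>\<alpha>\<in>A'. c \<alpha> * R \<alpha> \<beta>)" for \<beta>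
  proof -
    have "(\<Sum>\<alpha>\<in>A. c' \<alpha> * R \<alpha> \<beta>) = (\<Sum>\<alpha>\<in>A'. c' \<alpha> * R \<alpha> \<beta>)"
      by (rule sum.mono_neutral_right[OF fin sub]) (simp add: c'_def)
    then show ?thesis by (simp add: c'_def)
  qed
  then have "c' \<alpha> = 0" using indep c \<alpha> sub unfolding lin_indep_rows_def by auto
  then show "c \<alpha> = 0" using \<alpha> by (simp add: c'_def)
qed

lemma ex_nonsingular_column_selection:
  fixes R :: "'a \<Rightarrow> 'b \<Rightarrow> complex"
  assumes "finite A" and "lin_indep_rows A C R"
  shows "\<exists>\<sigma>. inj_on \<sigma> A \<and> \<sigma> ` A \<subseteq> C \<and> det_on A (\<lambda>\<alpha> \<alpha>'. R \<alpha> (\<sigma> \<alpha>')) \<noteq> 0"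
  using assms
proof (induction A rule: finite_induct)
  case empty
  then show ?case by simp
next
  case (insert a A)
  let ?I = "insert a A"
  have finI: "finite ?I" using insert.hyps by simp
  obtain \<sigma> where inj: "inj_on \<sigma> A" and into: "\<sigma> ` A \<subseteq> C"
    and minor: "det_on A (\<lambda>\<alpha> \<alpha>'. R \<alpha> (\<sigma> \<alpha>')) \<noteq> 0"
    using insert.IH lin_indep_rows_subset[OF insert.prems _ finI] by blast
  obtain w where expand: "\<And>v. det_on ?I (\<lambda>i j. if j = a then v i else R i (\<sigma> j)) = (\<Sum>i\<in>?I. v i * w i)"
    and wa: "w a = det_on (?I - {a}) (\<lambda>\<alpha> \<alpha>'. R \<alpha> (\<sigma> \<alpha>'))"
    using det_on_linear_in_column[OF finI insertI1, where N = "\<lambda>\<alpha> \<alpha>'. R \<alpha> (\<sigma> \<alpha>')"] by blast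
  have "w a \<noteq> 0" using wa minor insert.hyps by simp
  then have "\<not> (\<forall>\<beta>\<in>C. (\<Sum>i\<in>?I. w i * R i \<beta>) = 0)"
    using insert.prems unfolding lin_indep_rows_def by blast
  then obtain \<beta> where \<beta>: "\<beta> \<in> C" and "(\<Sum>i\<in>?I. R i \<beta> * w i) \<noteq> 0"
    by (auto simp: mult.commute)
  moreover have "(\<lambda>\<alpha> \<alpha>'. R \<alpha> ((\<sigma>(a := \<beta>)) \<alpha>')) = (\<lambda>i j. if j = a then R i \<beta> else R i (\<sigma> j))"
    by (auto simp: fun_eq_iff)
  ultimately have d: "det_on ?I (\<lambda>\<alpha> \<alpha>'. R \<alpha> ((\<sigma>(a := \<beta>)) \<alpha>')) \<noteq> 0"
    by (simp add: expand)
  have "\<beta> \<notin> \<sigma> ` A"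
  proof
    assume "\<beta> \<in> \<sigma> ` A"
    then obtain a1 where "a1 \<in> A" "\<beta> = \<sigma> a1" by blast
    then have "det_on ?I (\<lambda>\<alpha> \<alpha>'. R \<alpha> ((\<sigma>(a := \<beta>)) \<alpha>')) = 0"
      using insert.hyps by (intro det_on_eq_columns[OF finI, of a a1]) auto
    with d show False by contradiction
  qed
  then show ?case
    using inj into \<beta> d insert.hyps by (intro exI[of _ "\<sigma>(a := \<beta>)"]) (auto simp: inj_on_def)
qed

section \<open>Counting multi-indices\<close>

lemma le_mdeg: "(\<alpha>::'n::finite mi) i \<le> mdeg \<alpha>"
  unfolding mdeg_def by (rule member_le_sum) auto

lemma finite_mdeg_le: "finite {\<alpha>::'n::finite mi. mdeg \<alpha> \<le> k}"
proof (rule finite_subset)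
  show "{\<alpha>::'n mi. mdeg \<alpha> \<le> k} \<subseteq> PiE UNIV (\<lambda>_. {..k})"
    using le_mdeg order_trans by (fastforce simp: PiE_def extensional_def)
qed (rule finite_PiE; simp)

lemma finite_mdeg_less: "finite {\<alpha>::'n::finite mi. mdeg \<alpha> < k}"
  by (rule finite_subset[OF _ finite_mdeg_le[of k]]) auto

lemma size_eq_mdeg_count: "size M = mdeg (count (M :: 'n::finite multiset))"
proof -
  have "size M = sum (count M) (set_mset M)" by (simp add: size_multiset_overloaded_eq)
  also have "\<dots> = sum (count M) UNIV"
    by (rule sum.mono_neutral_left) (auto simp: count_eq_zero_iff)
  finally show ?thesis by (simp add: mdeg_def)
qed

lemma card_mdeg_eq: "card {\<alpha>::'n::finite mi. mdeg \<alpha> = j} = (CARD('n) + j - 1) choose j"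
proof -
  have "bij_betw count (multisets_of_size (UNIV::'n set) j) {\<alpha>. mdeg \<alpha> = j}"
    by (rule bij_betw_byWitness[where f'=Abs_multiset])
       (auto simp: count_inverse count_Abs_multiset multisets_of_size_def size_eq_mdeg_count)
  then have "card {\<alpha>::'n mi. mdeg \<alpha> = j} = card (multisets_of_size (UNIV::'n set) j)"
    by (simp add: bij_betw_same_card)
  also have "\<dots> = (CARD('n) + j - 1) choose j" by (rule card_multisets_of_size) simp
  finally show ?thesis .
qed

lemma card_mdeg_le: "card {\<alpha>::'n::finite mi. mdeg \<alpha> \<le> k} = Nk CARD('n) k"
proof -
  have U: "{\<alpha>::'n mi. mdeg \<alpha> \<le> k} = (\<Union>j\<in>{..k}. {\<alpha>. mdeg \<alpha> = j})" by auto
  have "card {\<alpha>::'n mi. mdeg \<alpha> \<le> k} = (\<Sum>j\<le>k. card {\<alpha>::'n mi. mdeg \<alpha> = j})"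
    unfolding U
    by (rule card_UN_disjoint) (auto intro: finite_subset[OF _ finite_mdeg_le[of k]])
  also have "\<dots> = (\<Sum>j\<le>k. (CARD('n) - 1 + j) choose j)"
    by (rule sum.cong) (auto simp: card_mdeg_eq)
  also have "\<dots> = Suc (CARD('n) - 1 + k) choose k" by (rule sum_choose_lower)
  also have "\<dots> = (CARD('n) + k) choose k" by simp
  also have "\<dots> = (CARD('n) + k) choose CARD('n)"
    using binomial_symmetric[of k "CARD('n) + k"] by simp
  finally show ?thesis by (simp add: Nk_def)
qed

lemma card_mdeg_between:
  assumes "m < k"
  shows "card {\<alpha>::'n::finite mi. k - m \<le> mdeg \<alpha> \<and> mdeg \<alpha> \<le> k - 1}
    = Nk CARD('n) (k - 1) - Nk CARD('n) (k - m - 1)"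
proof -
  have "{\<alpha>::'n mi. k - m \<le> mdeg \<alpha> \<and> mdeg \<alpha> \<le> k - 1}
      = {\<alpha>. mdeg \<alpha> \<le> k - 1} - {\<alpha>. mdeg \<alpha> \<le> k - m - 1}"
    using assms by auto
  moreover have "{\<alpha>::'n mi. mdeg \<alpha> \<le> k - m - 1} \<subseteq> {\<alpha>. mdeg \<alpha> \<le> k - 1}" by auto
  ultimately show ?thesis
    by (simp add: card_Diff_subset[OF finite_mdeg_le] card_mdeg_le)
qed

section \<open>Monic orthogonal polynomials and the matrix R\<close>

lemma madd_commute: "madd \<alpha> \<beta> = madd \<beta> \<alpha>"
  by (simp add: madd_def add.commute)

lemma pair_mono_eq_sum:
  assumes "finite S" and "\<And>\<gamma>. \<gamma> \<notin> S \<Longrightarrow> p \<gamma> = 0"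
  shows "pair_mono u p \<beta> = (\<Sum>\<gamma>\<in>S. p \<gamma> * u (madd \<gamma> \<beta>))"
  unfolding pair_mono_def
  by (rule sum.mono_neutral_left) (use assms in \<open>auto simp: psupp_def\<close>)

lemma quasi_definite_det_mdeg_less:
  assumes "quasi_definite (u::'n::finite lfun)"
  shows "det_on {\<gamma>::'n mi. mdeg \<gamma> < d} (\<lambda>\<beta> \<gamma>. u (madd \<beta> \<gamma>)) \<noteq> 0"
proof (cases d)
  case (Suc d')
  then have "{\<gamma>::'n mi. mdeg \<gamma> < d} = {\<gamma>. mdeg \<gamma> \<le> d'}" by auto
  then show ?thesis using assms unfolding quasi_definite_def by simp
qed simp

definition is_mop :: "'n::finite lfun \<Rightarrow> 'n mi \<Rightarrow> 'n cpoly \<Rightarrow> bool" where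
  "is_mop u \<alpha> p \<longleftrightarrow> is_poly p \<and> p \<alpha> = 1
      \<and> (\<forall>\<gamma>. \<gamma> \<noteq> \<alpha> \<and> mdeg \<gamma> \<ge> mdeg \<alpha> \<longrightarrow> p \<gamma> = 0)
      \<and> (\<forall>\<beta>. mdeg \<beta> < mdeg \<alpha> \<longrightarrow> pair_mono u p \<beta> = 0)"

lemma pair_mono_monic:
  assumes "finite S" and "\<alpha> \<notin> S" and "p \<alpha> = 1" and "\<And>\<gamma>. \<gamma> \<notin> insert \<alpha> S \<Longrightarrow> p \<gamma> = 0"
  shows "pair_mono u p \<beta> = u (madd \<alpha> \<beta>) + (\<Sum>\<gamma>\<in>S. u (madd \<beta> \<gamma>) * p \<gamma>)"
proof -
  have "pair_mono u p \<beta> = (\<Sum>\<gamma>\<in>insert \<alpha> S. p \<gamma> * u (madd \<gamma> \<beta>))"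
    by (rule pair_mono_eq_sum) (use assms in auto)
  also have "\<dots> = u (madd \<alpha> \<beta>) + (\<Sum>\<gamma>\<in>S. u (madd \<beta> \<gamma>) * p \<gamma>)"
    using assms by (simp add: madd_commute mult.commute)
  finally show ?thesis .
qed

lemma ex_is_mop:
  assumes qd: "quasi_definite (u::'n::finite lfun)"
  shows "\<exists>p. is_mop u \<alpha> p"
proof -
  define S where "S = {\<gamma>::'n mi. mdeg \<gamma> < mdeg \<alpha>}"
  have finS: "finite S" unfolding S_def by (rule finite_mdeg_less)
  have aS: "\<alpha> \<notin> S" by (simp add: S_def)
  have dS: "det_on S (\<lambda>\<beta> \<gamma>. u (madd \<beta> \<gamma>)) \<noteq> 0"
    unfolding S_def by (rule quasi_definite_det_mdeg_less[OF qd])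
  obtain c where c: "\<forall>\<beta>\<in>S. (\<Sum>\<gamma>\<in>S. u (madd \<beta> \<gamma>) * c \<gamma>) = - u (madd \<alpha> \<beta>)"
    using det_on_nonzero_solvable[OF finS dS, where b = "\<lambda>\<beta>. - u (madd \<alpha> \<beta>)"] by blast
  define p where "p \<gamma> = (if \<gamma> = \<alpha> then 1 else if \<gamma> \<in> S then c \<gamma> else 0)" for \<gamma>
  have p1: "p \<alpha> = 1" and p0: "\<And>\<gamma>. \<gamma> \<notin> insert \<alpha> S \<Longrightarrow> p \<gamma> = 0"
    by (simp_all add: p_def)
  have "is_mop u \<alpha> p"
    unfolding is_mop_def
  proof (intro conjI allI impI)
    show "is_poly p" unfolding is_poly_def psupp_def
      by (rule finite_subset[of _ "insert \<alpha> S"]) (use finS p0 in auto)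
    show "p \<alpha> = 1" by (rule p1)
    show "p \<gamma> = 0" if "\<gamma> \<noteq> \<alpha> \<and> mdeg \<alpha> \<le> mdeg \<gamma>" for \<gamma>
      using that by (simp add: p_def S_def)
    show "pair_mono u p \<beta> = 0" if "mdeg \<beta> < mdeg \<alpha>" for \<beta>
    proof -
      have "(\<Sum>\<gamma>\<in>S. u (madd \<beta> \<gamma>) * p \<gamma>) = (\<Sum>\<gamma>\<in>S. u (madd \<beta> \<gamma>) * c \<gamma>)"
        by (intro sum.cong) (auto simp: p_def S_def)
      then show ?thesis
        using pair_mono_monic[of S \<alpha> p u \<beta>, OF finS aS p1 p0] c that by (simp add: S_def)
    qed
  qed
  then show ?thesis by blast
qed

lemma is_mop_unique:
  assumes qd: "quasi_definite (u::'n::finite lfun)" and p: "is_mop u \<alpha> p" and q: "is_mop u \<alpha> q"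
  shows "p = q"
proof -
  define S where "S = {\<gamma>::'n mi. mdeg \<gamma> < mdeg \<alpha>}"
  have finS: "finite S" unfolding S_def by (rule finite_mdeg_less)
  have aS: "\<alpha> \<notin> S" by (simp add: S_def)
  have dS: "det_on S (\<lambda>\<beta> \<gamma>. u (madd \<beta> \<gamma>)) \<noteq> 0"
    unfolding S_def by (rule quasi_definite_det_mdeg_less[OF qd])
  have p1: "p \<alpha> = 1" and q1: "q \<alpha> = 1" using p q by (auto simp: is_mop_def)
  have p0: "\<And>\<gamma>. \<gamma> \<notin> insert \<alpha> S \<Longrightarrow> p \<gamma> = 0" and q0: "\<And>\<gamma>. \<gamma> \<notin> insert \<alpha> S \<Longrightarrow> q \<gamma> = 0"
    using p q by (auto simp: is_mop_def S_def)
  have "(\<Sum>\<gamma>\<in>S. u (madd \<beta> \<gamma>) * (p \<gamma> - q \<gamma>)) = 0" if \<beta>: "\<beta> \<in> S" for \<beta>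
  proof -
    have "pair_mono u p \<beta> = pair_mono u q \<beta>"
      using p q \<beta> by (auto simp: is_mop_def S_def)
    then have "(\<Sum>\<gamma>\<in>S. u (madd \<beta> \<gamma>) * p \<gamma>) = (\<Sum>\<gamma>\<in>S. u (madd \<beta> \<gamma>) * q \<gamma>)"
      using pair_mono_monic[of S \<alpha> p u \<beta>, OF finS aS p1 p0]
        pair_mono_monic[of S \<alpha> q u \<beta>, OF finS aS q1 q0]
      by simp
    then show ?thesis by (simp add: right_diff_distrib sum_subtractf)
  qed
  then have "p \<gamma> - q \<gamma> = 0" if "\<gamma> \<in> S" for \<gamma>
    using det_on_nonzero_kernel[OF finS dS, of "\<lambda>\<gamma>. p \<gamma> - q \<gamma>"] that by blast
  then show "p = q" using p0 q0 p1 q1 by (metis eq_iff_diff_eq_0 insert_iff ext)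
qed

lemma is_mop_mop:
  assumes "quasi_definite (u::'n::finite lfun)"
  shows "is_mop u \<alpha> (mop u \<alpha>)"
proof -
  have "\<exists>!p. is_mop u \<alpha> p" using ex_is_mop is_mop_unique assms by blast
  then show ?thesis unfolding mop_def is_mop_def[symmetric] by (rule theI')
qed

lemma mop_diag: "quasi_definite u \<Longrightarrow> mop u \<alpha> \<alpha> = 1"
  using is_mop_mop by (auto simp: is_mop_def)

lemma mop_eq_zero:
  "quasi_definite u \<Longrightarrow> \<gamma> \<noteq> \<alpha> \<Longrightarrow> mdeg \<alpha> \<le> mdeg \<gamma> \<Longrightarrow> mop u \<alpha> \<gamma> = 0"
  using is_mop_mop by (auto simp: is_mop_def)

lemma mop_lin_indep:
  assumes qd: "quasi_definite u" and fin: "finite A"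
    and zero: "\<And>\<gamma>. \<gamma> \<in> A \<Longrightarrow> (\<Sum>\<alpha>\<in>A. c \<alpha> * mop u \<alpha> \<gamma>) = 0"
  shows "\<forall>\<alpha>\<in>A. c \<alpha> = 0"
proof (rule ccontr)
  assume "\<not> (\<forall>\<alpha>\<in>A. c \<alpha> = 0)"
  then have ne: "{\<alpha>\<in>A. c \<alpha> \<noteq> 0} \<noteq> {}" by blast
  have finE: "finite {\<alpha>\<in>A. c \<alpha> \<noteq> 0}" using fin by simp
  obtain a0 where a0: "a0 \<in> A" "c a0 \<noteq> 0"
    and top: "\<And>\<alpha>. \<alpha> \<in> A \<Longrightarrow> c \<alpha> \<noteq> 0 \<Longrightarrow> mdeg \<alpha> \<le> mdeg a0"
    using Max_in[OF finite_imageI[OF finE, of mdeg]] Max_ge[OF finite_imageI[OF finE, of mdeg]] ne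
    by fastforce
  have "(\<Sum>\<alpha>\<in>A. c \<alpha> * mop u \<alpha> a0) = c a0 * mop u a0 a0 + (\<Sum>\<alpha>\<in>A-{a0}. c \<alpha> * mop u \<alpha> a0)"
    by (rule sum.remove[OF fin a0(1)])
  also have "(\<Sum>\<alpha>\<in>A-{a0}. c \<alpha> * mop u \<alpha> a0) = 0"
  proof (intro sum.neutral ballI)
    fix \<alpha> assume "\<alpha> \<in> A - {a0}"
    then show "c \<alpha> * mop u \<alpha> a0 = 0"
      using top[of \<alpha>] mop_eq_zero[OF qd, of a0 \<alpha>] by (cases "c \<alpha> = 0") auto
  qed
  finally show False using zero[OF a0(1)] mop_diag[OF qd] a0(2) by simp
qed

lemma lin_indep_rows_Rmat:
  fixes u uc :: "'n::finite lfun"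
  assumes qu: "quasi_definite u" and quc: "quasi_definite uc"
    and sub: "A \<subseteq> {\<alpha>::'n mi. mdeg \<alpha> < k}"
  shows "lin_indep_rows A {\<beta>. mdeg \<beta> < k} (Rmat u uc)"
  unfolding lin_indep_rows_def
proof (intro allI impI)
  fix c assume c: "\<forall>\<beta>\<in>{\<beta>. mdeg \<beta> < k}. (\<Sum>\<alpha>\<in>A. c \<alpha> * Rmat u uc \<alpha> \<beta>) = 0"
  define C where "C = {\<beta>::'n mi. mdeg \<beta> < k}"
  have finC: "finite C" unfolding C_def by (rule finite_mdeg_less)
  have finA: "finite A" using sub finC finite_subset by (auto simp: C_def)
  have dC: "det_on C (\<lambda>\<beta> \<gamma>. uc (madd \<beta> \<gamma>)) \<noteq> 0"
    unfolding C_def by (rule quasi_definite_det_mdeg_less[OF quc])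
  define p where "p \<gamma> = (\<Sum>\<alpha>\<in>A. c \<alpha> * mop u \<alpha> \<gamma>)" for \<gamma>
  have R: "Rmat u uc \<alpha> \<beta> = (\<Sum>\<gamma>\<in>C. uc (madd \<beta> \<gamma>) * mop u \<alpha> \<gamma>)" if "\<alpha> \<in> A" for \<alpha> \<beta>
  proof -
    have "mop u \<alpha> \<gamma> = 0" if "\<gamma> \<notin> C" for \<gamma>
    proof -
      have "\<gamma> \<noteq> \<alpha>" "mdeg \<alpha> \<le> mdeg \<gamma>" using that \<open>\<alpha> \<in> A\<close> sub by (auto simp: C_def)
      then show ?thesis by (rule mop_eq_zero[OF qu])
    qed
    then show ?thesis
      unfolding Rmat_def by (simp add: pair_mono_eq_sum[OF finC] madd_commute mult.commute)
  qed
  have "(\<Sum>\<gamma>\<in>C. uc (madd \<beta> \<gamma>) * p \<gamma>) = 0" if "\<beta> \<in> C" for \<beta>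
  proof -
    have "(\<Sum>\<gamma>\<in>C. uc (madd \<beta> \<gamma>) * p \<gamma>)
        = (\<Sum>\<alpha>\<in>A. c \<alpha> * (\<Sum>\<gamma>\<in>C. uc (madd \<beta> \<gamma>) * mop u \<alpha> \<gamma>))"
      unfolding p_def
      by (simp add: sum_distrib_left sum.swap[of _ C] mult.assoc mult.left_commute)
    also have "\<dots> = (\<Sum>\<alpha>\<in>A. c \<alpha> * Rmat u uc \<alpha> \<beta>)"
      by (rule sum.cong) (simp_all add: R)
    also have "\<dots> = 0" using c that by (simp add: C_def)
    finally show ?thesis .
  qed
  then have "p \<gamma> = 0" if "\<gamma> \<in> C" for \<gamma>
    using det_on_nonzero_kernel[OF finC dC] that by blast
  then show "\<forall>\<alpha>\<in>A. c \<alpha> = 0"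
    using mop_lin_indep[OF qu finA] sub by (auto simp: p_def C_def)
qed

theorem mainTheorem4:
  fixes T :: "(real^'n::finite \<Rightarrow> complex) \<Rightarrow> complex"
    and u uc :: "'n lfun"
    and Q2 :: "'n cpoly"
    and m2 :: nat
  assumes "fast_decreasing T"
    and "\<forall>\<gamma>. u \<gamma> = dist_moment T \<gamma>"
    and "is_poly Q2" and "Q2 \<noteq> (\<lambda>_. 0)" and "pdegree Q2 = m2"
    and "zero_set Q2 \<inter> dist_support T = {}"
    and "poly_times_lf Q2 uc = u"
    and "quasi_definite u" and "quasi_definite uc"
  shows "\<forall>k > m2. \<exists>B \<sigma>.
           B \<subseteq> {\<beta>. mdeg \<beta> < k}
         \<and> card B = Nk CARD('n) (k - 1) - Nk CARD('n) (k - m2 - 1)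
         \<and> bij_betw \<sigma> {\<alpha>. k - m2 \<le> mdeg \<alpha> \<and> mdeg \<alpha> \<le> k - 1} B
         \<and> det_on {\<alpha>. k - m2 \<le> mdeg \<alpha> \<and> mdeg \<alpha> \<le> k - 1} (\<lambda>\<alpha> \<alpha>'. Rmat u uc \<alpha> (\<sigma> \<alpha>')) \<noteq> 0"
proof (intro allI impI)
  fix k assume k: "k > m2"
  define A where "A = {\<alpha>::'n mi. k - m2 \<le> mdeg \<alpha> \<and> mdeg \<alpha> \<le> k - 1}"
  have sub: "A \<subseteq> {\<alpha>. mdeg \<alpha> < k}" using k by (auto simp: A_def)
  have "finite A" using sub finite_mdeg_less finite_subset by blast
  then obtain \<sigma> where \<sigma>: "inj_on \<sigma> A" "\<sigma> ` A \<subseteq> {\<beta>. mdeg \<beta> < k}"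
    "det_on A (\<lambda>\<alpha> \<alpha>'. Rmat u uc \<alpha> (\<sigma> \<alpha>')) \<noteq> 0"
    using ex_nonsingular_column_selection lin_indep_rows_Rmat[OF assms(8,9) sub] by blast
  have "card (\<sigma> ` A) = Nk CARD('n) (k - 1) - Nk CARD('n) (k - m2 - 1)"
    using card_image[OF \<sigma>(1)] card_mdeg_between[OF k] by (simp add: A_def)
  with \<sigma> show "\<exists>B \<sigma>. B \<subseteq> {\<beta>. mdeg \<beta> < k}
         \<and> card B = Nk CARD('n) (k - 1) - Nk CARD('n) (k - m2 - 1)
         \<and> bij_betw \<sigma> {\<alpha>. k - m2 \<le> mdeg \<alpha> \<and> mdeg \<alpha> \<le> k - 1} B
         \<and> det_on {\<alpha>. k - m2 \<le> mdeg \<alpha> \<and> mdeg \<alpha> \<le> k - 1} (\<lambda>\<alpha> \<alpha>'. Rmat u uc \<alpha> (\<sigma> \<alpha>')) \<noteq> 0"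
    unfolding A_def bij_betw_def by blast
qed

end
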